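(* For integers $t\ge 3$ and $m\ge 2$, let $B^t_m$ be the graph consisting of $m$ copies of the cycle $C_t$ glued together along a single common edge (the copies otherwise disjoint). Then $B^t_m$ is complement critical if and only if $t=3$ or $t=4$.
   Context: All graphs are finite and simple with nonempty vertex set; $\overline{G}$ denotes the complement of $G$. An orthogonal vector representation of a graph $G=(V,E)$ in $\mathbb{R}^d$ is a map $\phi:V\to\mathbb{R}^d$ with $\phi(v)\neq 0$ for all $v$, and for distinct $u,v$: $\langle\phi(u),\phi(v)\rangle=0$ if and only if $uv\notin E$. ${\rm mvr}(G)$ is the smallest $d$ for which such a representation exists. $G$ is complement critical if ${\rm mvr}(H)+{\rm mvr}(\overline{H})<{\rm mvr}(G)+{\rm mvr}(\overline{G})$ for every proper induced subgraph $H$ of $G$ (with nonempty vertex set). *)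

theory Defs
  imports Complex_Main
begin

type_synonym 'a graph = "'a set \<times> 'a set set"

definition verts :: "'a graph \<Rightarrow> 'a set" where "verts G = fst G"
definition edges :: "'a graph \<Rightarrow> 'a set set" where "edges G = snd G"

definition simple_graph :: "'a graph \<Rightarrow> bool" where
  "simple_graph G \<longleftrightarrow> finite (verts G) \<and> verts G \<noteq> {} \<and>
     (\<forall>e\<in>edges G. \<exists>u v. u \<in> verts G \<and> v \<in> verts G \<and> u \<noteq> v \<and> e = {u, v})"

definition adj :: "'a graph \<Rightarrow> 'a \<Rightarrow> 'a \<Rightarrow> bool" where
  "adj G u v \<longleftrightarrow> {u, v} \<in> edges G"

definition compl_graph :: "'a graph \<Rightarrow> 'a graph" where
  "compl_graph G = (verts G,
     {{u, v} | u v. u \<in> verts G \<and> v \<in> verts G \<and> u \<noteq> v \<and> {u, v} \<notin> edges G})"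

definition induced :: "'a graph \<Rightarrow> 'a set \<Rightarrow> 'a graph" where
  "induced G S = (S, {e \<in> edges G. e \<subseteq> S})"

text \<open>Vectors of R^d are represented as functions nat => real, of which only the
  coordinates 0..d-1 are used.\<close>
definition inner_d :: "nat \<Rightarrow> (nat \<Rightarrow> real) \<Rightarrow> (nat \<Rightarrow> real) \<Rightarrow> real" where
  "inner_d d x y = (\<Sum>i<d. x i * y i)"

definition orth_rep :: "'a graph \<Rightarrow> nat \<Rightarrow> ('a \<Rightarrow> nat \<Rightarrow> real) \<Rightarrow> bool" where
  "orth_rep G d \<phi> \<longleftrightarrow>
     (\<forall>v\<in>verts G. \<exists>i<d. \<phi> v i \<noteq> 0) \<and>
     (\<forall>u\<in>verts G. \<forall>v\<in>verts G. u \<noteq> v \<longrightarrow>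
        (inner_d d (\<phi> u) (\<phi> v) = 0 \<longleftrightarrow> \<not> adj G u v))"

definition mvr :: "'a graph \<Rightarrow> nat" where
  "mvr G = (LEAST d. \<exists>\<phi>. orth_rep G d \<phi>)"

definition complement_critical :: "'a graph \<Rightarrow> bool" where
  "complement_critical G \<longleftrightarrow>
     (\<forall>S. S \<noteq> {} \<and> S \<subset> verts G \<longrightarrow>
        mvr (induced G S) + mvr (compl_graph (induced G S)) < mvr G + mvr (compl_graph G))"

text \<open>The book graph B^t_m: m copies of C_t glued along a common edge {a,b},
  a = Inl 0, b = Inl 1.  Copy j (j < m) has internal vertices Inr (j,i), i < t-2,
  forming the path a - (j,0) - (j,1) - ... - (j,t-3) - b.\<close>
definition book_graph :: "nat \<Rightarrow> nat \<Rightarrow> (nat + nat \<times> nat) graph" where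
  "book_graph t m =
    ({Inl 0, Inl 1} \<union> {Inr (j, i) | j i. j < m \<and> i < t - 2},
     {{Inl 0, Inl 1}}
     \<union> {{Inl 0, Inr (j, 0)} | j. j < m}
     \<union> {{Inr (j, i), Inr (j, i + 1)} | j i. j < m \<and> i + 1 < t - 2}
     \<union> {{Inr (j, t - 3), Inl 1} | j. j < m})"

end

theory Submission
  imports Defs "HOL-Library.Function_Algebras"
begin

text \<open>Since the minimum rank is monotone under induced subgraphs, complement criticality
  only has to be tested on the graphs obtained by deleting one vertex.  The book graph has
  minimum rank m (t - 2): coordinates indexed by the path edges give a representation, and
  each path vertex paired with its successor gives a triangular system of that size; deleting
  a path vertex saves one coordinate.  Its complement has minimum rank 3 for t = 3 and 4 for
  t = 4, and small explicit representations show that deleting any vertex lowers the sum.  For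
  t \<ge> 5 a trigonometric construction represents the complement in dimension 3, while
  deleting the hub a leaves a triangular system of size 3 in the complement and does not
  lower the minimum rank of the book, so the sum does not drop.\<close>

section \<open>Orthogonal representations of a vertex set\<close>

definition orth_rep_on :: "'a set \<Rightarrow> ('a \<Rightarrow> 'a \<Rightarrow> bool) \<Rightarrow> nat \<Rightarrow> ('a \<Rightarrow> nat \<Rightarrow> real) \<Rightarrow> bool" where
  "orth_rep_on S A d \<phi> \<longleftrightarrow> (\<forall>v\<in>S. \<exists>i<d. \<phi> v i \<noteq> 0) \<and>
     (\<forall>u\<in>S. \<forall>v\<in>S. u \<noteq> v \<longrightarrow> (inner_d d (\<phi> u) (\<phi> v) = 0 \<longleftrightarrow> \<not> A u v))"

definition mvr_on :: "'a set \<Rightarrow> ('a \<Rightarrow> 'a \<Rightarrow> bool) \<Rightarrow> nat" where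
  "mvr_on S A = (LEAST d. \<exists>\<phi>. orth_rep_on S A d \<phi>)"

definition mvr_sum :: "'a set \<Rightarrow> ('a \<Rightarrow> 'a \<Rightarrow> bool) \<Rightarrow> nat" where
  "mvr_sum S A = mvr_on S A + mvr_on S (\<lambda>u v. \<not> A u v)"

lemma orth_rep_onI:
  assumes "\<And>v. v \<in> S \<Longrightarrow> \<exists>i<d. \<phi> v i \<noteq> 0"
    and "\<And>u v. u \<in> S \<Longrightarrow> v \<in> S \<Longrightarrow> u \<noteq> v \<Longrightarrow> inner_d d (\<phi> u) (\<phi> v) = 0 \<longleftrightarrow> \<not> A u v"
  shows "orth_rep_on S A d \<phi>"
  using assms unfolding orth_rep_on_def by blast

lemma orth_rep_on_orthogonal:
  "orth_rep_on S A d \<phi> \<Longrightarrow> u \<in> S \<Longrightarrow> v \<in> S \<Longrightarrow> u \<noteq> v \<Longrightarrow> \<not> A u v \<Longrightarrow> inner_d d (\<phi> u) (\<phi> v) = 0"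
  unfolding orth_rep_on_def by blast

lemma orth_rep_on_nonorthogonal:
  "orth_rep_on S A d \<phi> \<Longrightarrow> u \<in> S \<Longrightarrow> v \<in> S \<Longrightarrow> u \<noteq> v \<Longrightarrow> A u v \<Longrightarrow> inner_d d (\<phi> u) (\<phi> v) \<noteq> 0"
  unfolding orth_rep_on_def by blast

lemma orth_rep_on_self:
  assumes "orth_rep_on S A d \<phi>" "u \<in> S"
  shows "inner_d d (\<phi> u) (\<phi> u) \<noteq> 0"
proof -
  obtain i where i: "i < d" "\<phi> u i \<noteq> 0" using assms unfolding orth_rep_on_def by blast
  have "0 < \<phi> u i * \<phi> u i" using i(2) by (metis mult_neg_neg mult_pos_pos linorder_neqE_linordered_idom)
  also have "\<dots> \<le> inner_d d (\<phi> u) (\<phi> u)" unfolding inner_d_def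
    using i by (intro member_le_sum) auto
  finally show ?thesis by simp
qed

lemma orth_rep_on_subset: "orth_rep_on S A d \<phi> \<Longrightarrow> T \<subseteq> S \<Longrightarrow> orth_rep_on T A d \<phi>"
  unfolding orth_rep_on_def by blast

lemma orth_rep_on_embed:
  assumes "orth_rep_on S' A' d \<phi>" "inj_on f S" "f ` S \<subseteq> S'"
    and "\<And>u v. u \<in> S \<Longrightarrow> v \<in> S \<Longrightarrow> A' (f u) (f v) = A u v"
  shows "orth_rep_on S A d (\<phi> \<circ> f)"
proof (rule orth_rep_onI)
  fix v assume "v \<in> S"
  then show "\<exists>i<d. (\<phi> \<circ> f) v i \<noteq> 0" using assms(1,3) unfolding orth_rep_on_def by auto
next
  fix u v assume uv: "u \<in> S" "v \<in> S" "u \<noteq> v"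
  then have "f u \<noteq> f v" "f u \<in> S'" "f v \<in> S'" using assms(2,3) unfolding inj_on_def by auto
  then show "inner_d d ((\<phi> \<circ> f) u) ((\<phi> \<circ> f) v) = 0 \<longleftrightarrow> \<not> A u v"
    using assms(1) assms(4)[OF uv(1,2)] unfolding orth_rep_on_def by simp
qed

lemma mvr_on_le: "orth_rep_on S A d \<phi> \<Longrightarrow> mvr_on S A \<le> d"
  unfolding mvr_on_def by (rule Least_le) blast

lemma mvr_on_le_subset: "orth_rep_on T A d \<phi> \<Longrightarrow> S \<subseteq> T \<Longrightarrow> mvr_on S A \<le> d"
  using mvr_on_le orth_rep_on_subset by blast

lemma orth_rep_on_mvr_on: "orth_rep_on S A d \<phi> \<Longrightarrow> \<exists>\<psi>. orth_rep_on S A (mvr_on S A) \<psi>"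
  unfolding mvr_on_def by (rule LeastI) blast

lemma mvr_on_greatest:
  "orth_rep_on S A d \<phi> \<Longrightarrow> (\<And>d \<psi>. orth_rep_on S A d \<psi> \<Longrightarrow> k \<le> d) \<Longrightarrow> k \<le> mvr_on S A"
  using orth_rep_on_mvr_on by metis

lemma mvr_on_mono: "orth_rep_on T A d \<phi> \<Longrightarrow> S \<subseteq> T \<Longrightarrow> mvr_on S A \<le> mvr_on T A"
  using orth_rep_on_mvr_on mvr_on_le_subset by metis

lemma mvr_sum_mono:
  assumes "orth_rep_on T A d \<phi>" "orth_rep_on T (\<lambda>u v. \<not> A u v) d' \<psi>" "S \<subseteq> T"
  shows "mvr_sum S A \<le> mvr_sum T A"
  unfolding mvr_sum_def using mvr_on_mono[OF assms(1,3)] mvr_on_mono[OF assms(2,3)] by simp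

lemma mvr_sum_decreases_iff_vertex_deleted:
  assumes rep: "orth_rep_on V A d \<phi>" and rep_compl: "orth_rep_on V (\<lambda>u v. \<not> A u v) d' \<psi>"
    and nontrivial: "\<forall>v\<in>V. V - {v} \<noteq> {}"
  shows "(\<forall>S. S \<noteq> {} \<and> S \<subset> V \<longrightarrow> mvr_sum S A < mvr_sum V A) \<longleftrightarrow>
         (\<forall>v\<in>V. mvr_sum (V - {v}) A < mvr_sum V A)"
proof
  assume proper: "\<forall>S. S \<noteq> {} \<and> S \<subset> V \<longrightarrow> mvr_sum S A < mvr_sum V A"
  show "\<forall>v\<in>V. mvr_sum (V - {v}) A < mvr_sum V A"
  proof
    fix v assume "v \<in> V"
    then have "V - {v} \<noteq> {}" "V - {v} \<subset> V" using nontrivial by blast+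
    then show "mvr_sum (V - {v}) A < mvr_sum V A" by (rule proper[rule_format, OF conjI])
  qed
next
  assume deleted: "\<forall>v\<in>V. mvr_sum (V - {v}) A < mvr_sum V A"
  show "\<forall>S. S \<noteq> {} \<and> S \<subset> V \<longrightarrow> mvr_sum S A < mvr_sum V A"
  proof (intro allI impI)
    fix S assume "S \<noteq> {} \<and> S \<subset> V"
    then obtain v where "v \<in> V" "v \<notin> S" by blast
    then have v: "v \<in> V" "S \<subseteq> V - {v}" "V - {v} \<subseteq> V"
      using \<open>S \<noteq> {} \<and> S \<subset> V\<close> by auto
    have "mvr_sum S A \<le> mvr_sum (V - {v}) A"
      using mvr_sum_mono[OF orth_rep_on_subset[OF rep v(3)] orth_rep_on_subset[OF rep_compl v(3)] v(2)] .
    also have "\<dots> < mvr_sum V A" using deleted v(1) ..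
    finally show "mvr_sum S A < mvr_sum V A" .
  qed
qed

lemma orth_rep_induced: "orth_rep (induced G S) d \<phi> \<longleftrightarrow> orth_rep_on S (adj G) d \<phi>"
  unfolding orth_rep_def orth_rep_on_def induced_def verts_def edges_def adj_def by auto

lemma orth_rep_compl_induced:
  "orth_rep (compl_graph (induced G S)) d \<phi> \<longleftrightarrow> orth_rep_on S (\<lambda>u v. \<not> adj G u v) d \<phi>"
proof -
  have "adj (compl_graph (induced G S)) u v \<longleftrightarrow> \<not> adj G u v" if "u \<in> S" "v \<in> S" "u \<noteq> v" for u v
  proof
    assume "adj (compl_graph (induced G S)) u v"
    then obtain u' v' where "{u, v} = {u', v'}" "{u', v'} \<notin> {e \<in> snd G. e \<subseteq> S}"
      unfolding adj_def compl_graph_def induced_def verts_def edges_def by auto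
    then show "\<not> adj G u v" using that unfolding adj_def edges_def by auto
  next
    assume "\<not> adj G u v"
    then show "adj (compl_graph (induced G S)) u v"
      using that unfolding adj_def compl_graph_def induced_def verts_def edges_def by auto
  qed
  moreover have "verts (compl_graph (induced G S)) = S"
    unfolding compl_graph_def induced_def verts_def by simp
  ultimately show ?thesis unfolding orth_rep_def orth_rep_on_def by auto
qed

lemma complement_critical_iff_mvr_sum:
  assumes "simple_graph G"
  shows "complement_critical G \<longleftrightarrow>
    (\<forall>S. S \<noteq> {} \<and> S \<subset> verts G \<longrightarrow> mvr_sum S (adj G) < mvr_sum (verts G) (adj G))"
proof -
  have mvr_sum_induced: "mvr (induced G S) + mvr (compl_graph (induced G S)) = mvr_sum S (adj G)" for S
    unfolding mvr_def mvr_sum_def mvr_on_def orth_rep_induced orth_rep_compl_induced ..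
  have "induced G (verts G) = G"
    using assms unfolding simple_graph_def induced_def verts_def edges_def by (cases G) auto
  then show ?thesis unfolding complement_critical_def
    using mvr_sum_induced[of "verts G"] mvr_sum_induced by metis
qed

section \<open>A dimension bound from triangular systems\<close>

definition scale_vec :: "real \<Rightarrow> (nat \<Rightarrow> real) \<Rightarrow> nat \<Rightarrow> real" where
  "scale_vec c x = (\<lambda>j. c * x j)"

interpretation fvec: vector_space scale_vec
  by unfold_locales (auto simp: scale_vec_def fun_eq_iff algebra_simps)

definition trunc_vec :: "nat \<Rightarrow> (nat \<Rightarrow> real) \<Rightarrow> nat \<Rightarrow> real" where
  "trunc_vec d x = (\<lambda>j. if j < d then x j else 0)"

definition unit_vec :: "nat \<Rightarrow> nat \<Rightarrow> real" where
  "unit_vec i = (\<lambda>j. if j = i then 1 else 0)"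

lemma inner_d_commute: "inner_d d x y = inner_d d y x"
  unfolding inner_d_def by (simp add: mult.commute)

lemma inner_d_trunc_vec [simp]:
  "inner_d d (trunc_vec d x) y = inner_d d x y" "inner_d d x (trunc_vec d y) = inner_d d x y"
  unfolding inner_d_def trunc_vec_def by simp_all

lemma inner_d_span_eq_0:
  assumes "\<forall>s\<in>X. inner_d d w s = 0" "x \<in> fvec.span X"
  shows "inner_d d w x = 0"
  using assms(2)
proof (induct rule: fvec.span_induct_alt)
  case base
  show ?case by (simp add: inner_d_def)
next
  case (step c x y)
  have "inner_d d w (scale_vec c x + y) = c * inner_d d w x + inner_d d w y"
    unfolding inner_d_def scale_vec_def plus_fun_def
    by (simp add: sum.distrib sum_distrib_left algebra_simps)
  then show ?case using step assms(1) by (metis mult_zero_right add_0)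
qed

lemma inner_d_spans_eq_0:
  assumes "\<forall>x\<in>X. \<forall>y\<in>Y. inner_d d x y = 0" "x \<in> fvec.span X" "y \<in> fvec.span Y"
  shows "inner_d d x y = 0"
proof -
  have "\<forall>s\<in>X. inner_d d y s = 0" using assms(1,3) inner_d_span_eq_0 inner_d_commute by metis
  then show ?thesis using inner_d_span_eq_0 assms(2) inner_d_commute by metis
qed

lemma span_vanishing_beyond:
  assumes "\<forall>s\<in>X. \<forall>j\<ge>d. s j = 0" "x \<in> fvec.span X"
  shows "\<forall>j\<ge>d. x j = 0"
  using assms(2) by (induct rule: fvec.span_induct_alt) (use assms(1) in \<open>auto simp: scale_vec_def\<close>)

lemma inner_d_self_eq_0:
  assumes "\<forall>j\<ge>d. x j = 0" "inner_d d x x = 0"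
  shows "x = 0"
proof
  fix j
  have "\<forall>j<d. x j * x j = 0"
    using assms(2) unfolding inner_d_def by (subst (asm) sum_nonneg_eq_0_iff) auto
  then show "x j = 0 j" using assms(1) by (cases "j < d") auto
qed

lemma in_span_unit_vecs:
  assumes "\<forall>j\<ge>d. x j = 0"
  shows "x \<in> fvec.span (unit_vec ` {..<d})"
proof -
  have "x = (\<Sum>i<d. scale_vec (x i) (unit_vec i))"
  proof
    fix j
    have "(\<Sum>i<d. scale_vec (x i) (unit_vec i)) j = (\<Sum>i<d. scale_vec (x i) (unit_vec i) j)"
      by (induct d) (auto simp: plus_fun_def)
    also have "\<dots> = (\<Sum>i<d. if i = j then x j else 0)"
      by (rule sum.cong) (auto simp: scale_vec_def unit_vec_def)
    also have "\<dots> = x j" using assms by (cases "j < d") auto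
    finally show "x j = (\<Sum>i<d. scale_vec (x i) (unit_vec i)) j" by simp
  qed
  also have "\<dots> \<in> fvec.span (unit_vec ` {..<d})"
    by (intro fvec.span_sum fvec.span_scale fvec.span_base) auto
  finally show ?thesis .
qed

lemma length_le_dim_if_not_in_span_of_predecessors:
  fixes u :: "nat \<Rightarrow> nat \<Rightarrow> real"
  assumes vanish: "\<forall>i<k. \<forall>j\<ge>d. u i j = 0"
    and new: "\<forall>i<k. u i \<notin> fvec.span (u ` {..<i})"
  shows "k \<le> d"
proof -
  have indep: "fvec.independent (u ` {..<k'})" if "k' \<le> k" for k'
    using that
  proof (induct k')
    case 0
    then show ?case by (simp add: fvec.independent_empty)
  next
    case (Suc k')
    have "u ` {..<Suc k'} = insert (u k') (u ` {..<k'})" by (auto simp: lessThan_Suc)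
    then show ?case using Suc new fvec.independent_insertI by auto
  qed
  have "inj_on u {..<k}"
  proof (rule linorder_inj_onI)
    fix i j assume "i < j" "i \<in> {..<k}" "j \<in> {..<k}"
    then have "u i \<in> fvec.span (u ` {..<j})" by (intro fvec.span_base) auto
    then show "u i \<noteq> u j" using new \<open>j \<in> {..<k}\<close> by auto
  qed auto
  then have "k = card (u ` {..<k})" by (simp add: card_image)
  also have "\<dots> \<le> card (unit_vec ` {..<d})"
  proof -
    have "u ` {..<k} \<subseteq> fvec.span (unit_vec ` {..<d})" using vanish in_span_unit_vecs by auto
    then show ?thesis using fvec.independent_span_bound[OF _ indep[OF order_refl]] by auto
  qed
  also have "\<dots> \<le> d" using card_image_le[of "{..<d}" unit_vec] by simp
  finally show ?thesis .
qed

text \<open>Inside a group, the test vector w i shows that x i is not spanned by its predecessors;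
  orthogonality of different groups lets such a span membership be localised to one group.\<close>
lemma grouped_triangular_le_dim:
  fixes x w :: "nat \<Rightarrow> nat \<Rightarrow> real" and g :: "nat \<Rightarrow> 'b"
  assumes triangular: "\<forall>i<k. \<forall>j<i. g j = g i \<longrightarrow> inner_d d (w i) (x j) = 0"
    and diagonal: "\<forall>i<k. inner_d d (w i) (x i) \<noteq> 0"
    and groups_orthogonal: "\<forall>i<k. \<forall>j<k. g i \<noteq> g j \<longrightarrow> inner_d d (x i) (x j) = 0"
  shows "k \<le> d"
proof -
  define u where "u i = trunc_vec d (x i)" for i
  have vanish: "\<forall>j\<ge>d. u i j = 0" for i unfolding u_def trunc_vec_def by simp
  have "u i \<notin> fvec.span (u ` {..<i})" if ik: "i < k" for i
  proof
    assume "u i \<in> fvec.span (u ` {..<i})"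
    define X where "X = u ` {j. j < i \<and> g j = g i}"
    define Y where "Y = u ` {j. j < i \<and> g j \<noteq> g i}"
    have "u ` {..<i} = X \<union> Y" unfolding X_def Y_def by auto
    with \<open>u i \<in> fvec.span (u ` {..<i})\<close> have "u i \<in> fvec.span (X \<union> Y)" by simp
    then obtain y z where yz: "u i = y + z" "y \<in> fvec.span X" "z \<in> fvec.span Y"
      unfolding fvec.span_Un by blast
    have "u i \<in> fvec.span (insert (u i) X)" "y \<in> fvec.span (insert (u i) X)"
      using yz(2) fvec.span_mono[of X "insert (u i) X"] by (auto intro: fvec.span_base)
    then have "z \<in> fvec.span (insert (u i) X)"
      using fvec.span_diff[of "u i" _ y] yz(1) by (simp add: algebra_simps)
    moreover have "\<forall>a\<in>insert (u i) X. \<forall>b\<in>Y. inner_d d a b = 0"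
      unfolding X_def Y_def u_def using groups_orthogonal ik by auto
    ultimately have "inner_d d z z = 0" using inner_d_spans_eq_0 yz(3) by blast
    moreover have "\<forall>j\<ge>d. z j = 0"
      using span_vanishing_beyond[of Y d z] vanish yz(3) unfolding Y_def by auto
    ultimately have "z = 0" using inner_d_self_eq_0 by blast
    then have "u i \<in> fvec.span X" using yz by simp
    moreover have "\<forall>s\<in>X. inner_d d (w i) s = 0"
      unfolding X_def u_def using triangular ik by auto
    ultimately have "inner_d d (w i) (u i) = 0" using inner_d_span_eq_0 by blast
    then show False using diagonal ik unfolding u_def by simp
  qed
  then show ?thesis using length_le_dim_if_not_in_span_of_predecessors vanish by blast
qed

lemma orth_rep_on_grouped_triangular_le_dim:
  assumes rep: "orth_rep_on S A d \<phi>" and in_S: "\<forall>i<k. v i \<in> S"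
    and triangular: "\<forall>i<k. \<forall>j<i. g j = g i \<longrightarrow> inner_d d (w i) (\<phi> (v j)) = 0"
    and diagonal: "\<forall>i<k. inner_d d (w i) (\<phi> (v i)) \<noteq> 0"
    and groups_nonadjacent: "\<forall>i<k. \<forall>j<k. g i \<noteq> g j \<longrightarrow> v i \<noteq> v j \<and> \<not> A (v i) (v j)"
  shows "k \<le> d"
  using triangular diagonal
proof (rule grouped_triangular_le_dim)
  show "\<forall>i<k. \<forall>j<k. g i \<noteq> g j \<longrightarrow> inner_d d (\<phi> (v i)) (\<phi> (v j)) = 0"
    using groups_nonadjacent in_S orth_rep_on_orthogonal[OF rep] by blast
qed

section \<open>The book graph\<close>

definition book_vertices :: "nat \<Rightarrow> nat \<Rightarrow> (nat + nat \<times> nat) set" where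
  "book_vertices t m = {Inl 0, Inl 1} \<union> Inr ` ({..<m} \<times> {..<t - 2})"

definition book_adj :: "nat \<Rightarrow> nat \<Rightarrow> nat + nat \<times> nat \<Rightarrow> nat + nat \<times> nat \<Rightarrow> bool" where
  "book_adj t m u v \<longleftrightarrow> {u, v} \<in> edges (book_graph t m)"

lemma book_vertices_iff [simp]:
  "Inl p \<in> book_vertices t m \<longleftrightarrow> p = 0 \<or> p = 1"
  "Inr (j, i) \<in> book_vertices t m \<longleftrightarrow> j < m \<and> i < t - 2"
  unfolding book_vertices_def by auto

lemma book_vertices_cases:
  assumes "u \<in> book_vertices t m"
  obtains "u = Inl 0" | "u = Inl 1" | j i where "u = Inr (j, i)" "j < m" "i < t - 2"
  using assms unfolding book_vertices_def by auto

lemma book_adj_simps [simp]: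
  "book_adj t m (Inl p) (Inl q) \<longleftrightarrow> (p = 0 \<and> q = 1 \<or> p = 1 \<and> q = 0)"
  "book_adj t m (Inl p) (Inr (j, i)) \<longleftrightarrow> j < m \<and> (p = 0 \<and> i = 0 \<or> p = 1 \<and> i = t - 3)"
  "book_adj t m (Inr (j, i)) (Inl p) \<longleftrightarrow> j < m \<and> (p = 0 \<and> i = 0 \<or> p = 1 \<and> i = t - 3)"
  "book_adj t m (Inr (j, i)) (Inr (j', i')) \<longleftrightarrow>
     j < m \<and> j' = j \<and> (i' = i + 1 \<and> i + 1 < t - 2 \<or> i = i' + 1 \<and> i' + 1 < t - 2)"
  unfolding book_adj_def book_graph_def edges_def by (auto simp: doubleton_eq_iff)

lemma verts_book_graph: "verts (book_graph t m) = book_vertices t m"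
  unfolding book_graph_def verts_def book_vertices_def by auto

lemma adj_book_graph: "adj (book_graph t m) = book_adj t m"
  unfolding adj_def book_adj_def by (intro ext) simp

lemma book_adj_commute: "book_adj t m u v = book_adj t m v u"
  unfolding book_adj_def by (simp add: insert_commute)

lemma book_adj_imp_vertices:
  assumes "t \<ge> 3" "book_adj t m u v"
  shows "u \<in> book_vertices t m \<and> v \<in> book_vertices t m \<and> u \<noteq> v"
  using assms by (cases u; cases v) auto

lemma simple_book_graph:
  assumes "t \<ge> 3"
  shows "simple_graph (book_graph t m)"
  unfolding simple_graph_def verts_book_graph
proof (intro conjI ballI)
  show "finite (book_vertices t m)" "book_vertices t m \<noteq> {}" unfolding book_vertices_def by auto
  fix e assume e: "e \<in> edges (book_graph t m)"
  then obtain u v where "e = {u, v}" unfolding book_graph_def edges_def by auto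
  with e assms show "\<exists>u v. u \<in> book_vertices t m \<and> v \<in> book_vertices t m \<and> u \<noteq> v \<and> e = {u, v}"
    using book_adj_imp_vertices unfolding book_adj_def by blast
qed

section \<open>Lower bounds\<close>

text \<open>Vertex (j, i) is tested against its successor on the path of copy j; the copies
  are mutually nonadjacent groups.\<close>
lemma book_orth_rep_dim_ge:
  assumes t: "t \<ge> 3" and rep: "orth_rep_on S (book_adj t m) d \<phi>"
    and S: "book_vertices t m - {Inl 0} \<subseteq> S"
  shows "m * (t - 2) \<le> d"
proof -
  define n where "n = t - 2"
  have n: "n \<ge> 1" "t - 3 = n - 1" using t unfolding n_def by auto
  define v :: "nat \<Rightarrow> nat + nat \<times> nat" where "v i = Inr (i div n, i mod n)" for i
  define w where "w i = (if i mod n < n - 1 then \<phi> (Inr (i div n, i mod n + 1)) else \<phi> (Inl 1))"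
    for i :: nat
  have mod_less: "i mod n < n" for i using n by simp
  have div_less: "i div n < m" if "i < m * n" for i
    using that by (simp add: less_mult_imp_div_less mult.commute)
  have in_S: "Inr (j, p) \<in> S" if "j < m" "p < n" for j p using S that unfolding n_def by auto
  have "Inl 1 \<in> S" using S by auto
  have "\<forall>i<m * n. v i \<in> S" using in_S mod_less div_less unfolding v_def by auto
  then show ?thesis unfolding n_def[symmetric]
  proof (rule orth_rep_on_grouped_triangular_le_dim[OF rep, where g = "\<lambda>i. i div n" and w = w])
    show "\<forall>i<m * n. \<forall>j<i. j div n = i div n \<longrightarrow> inner_d d (w i) (\<phi> (v j)) = 0"
    proof (intro allI impI)
      fix i j assume ij: "i < m * n" "j < i" "j div n = i div n"
      then have "j mod n < i mod n" by (metis div_mult_mod_eq add_less_cancel_left)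
      moreover from this have "j mod n < n - 1" using mod_less[of i] by linarith
      ultimately show "inner_d d (w i) (\<phi> (v j)) = 0"
        unfolding w_def v_def using in_S \<open>Inl 1 \<in> S\<close> div_less ij n
        by (auto intro!: orth_rep_on_orthogonal[OF rep])
    qed
    show "\<forall>i<m * n. inner_d d (w i) (\<phi> (v i)) \<noteq> 0"
    proof (intro allI impI)
      fix i assume "i < m * n"
      then have i: "i div n < m" "i mod n < n" using div_less mod_less by auto
      show "inner_d d (w i) (\<phi> (v i)) \<noteq> 0"
      proof (cases "i mod n < n - 1")
        case True
        then show ?thesis unfolding w_def v_def
          by (simp, intro orth_rep_on_nonorthogonal[OF rep]) (use in_S i n_def in auto)
      next
        case False
        then have "i mod n = n - 1" using i(2) by linarith
        with False show ?thesis unfolding w_def v_def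
          by (simp, intro orth_rep_on_nonorthogonal[OF rep]) (use in_S \<open>Inl 1 \<in> S\<close> i n in auto)
      qed
    qed
    show "\<forall>i<m * n. \<forall>j<m * n. i div n \<noteq> j div n \<longrightarrow> v i \<noteq> v j \<and> \<not> book_adj t m (v i) (v j)"
      unfolding v_def by auto
  qed
qed

lemma book3_compl_orth_rep_dim_ge:
  assumes "m \<ge> 1" and rep: "orth_rep_on (book_vertices 3 m) (\<lambda>u v. \<not> book_adj 3 m u v) d \<phi>"
  shows "3 \<le> d"
proof -
  define v :: "nat \<Rightarrow> nat + nat \<times> nat" where "v i = [Inl 0, Inl 1, Inr (0, 0)] ! i" for i
  have "\<forall>i<3. v i \<in> book_vertices 3 m" using assms(1) by (simp add: v_def All_less_Suc2 numeral_eq_Suc)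
  then show ?thesis
  proof (rule orth_rep_on_grouped_triangular_le_dim[OF rep, where g = "\<lambda>_. 0" and w = "\<lambda>i. \<phi> (v i)"])
    show "\<forall>i<3. \<forall>j<i. (0::nat) = 0 \<longrightarrow> inner_d d (\<phi> (v i)) (\<phi> (v j)) = 0"
      using assms(1) by (simp add: v_def All_less_Suc2 numeral_eq_Suc orth_rep_on_orthogonal[OF rep])
    show "\<forall>i<3. inner_d d (\<phi> (v i)) (\<phi> (v i)) \<noteq> 0"
      using \<open>\<forall>i<3. v i \<in> book_vertices 3 m\<close> orth_rep_on_self[OF rep] by blast
  qed simp
qed

lemma book4_compl_orth_rep_dim_ge:
  assumes "m \<ge> 2" and rep: "orth_rep_on (book_vertices 4 m) (\<lambda>u v. \<not> book_adj 4 m u v) d \<phi>"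
  shows "4 \<le> d"
proof -
  define v :: "nat \<Rightarrow> nat + nat \<times> nat" where "v i = [Inl 1, Inr (0, 0), Inr (1, 0), Inl 0] ! i" for i
  define w :: "nat \<Rightarrow> nat + nat \<times> nat" where "w i = [Inl 1, Inr (1, 1), Inr (0, 1), Inl 0] ! i" for i
  have "\<forall>i<4. v i \<in> book_vertices 4 m" using assms(1) by (simp add: v_def All_less_Suc2 numeral_eq_Suc)
  then show ?thesis
  proof (rule orth_rep_on_grouped_triangular_le_dim[OF rep, where g = "\<lambda>_. 0" and w = "\<lambda>i. \<phi> (w i)"])
    show "\<forall>i<4. \<forall>j<i. (0::nat) = 0 \<longrightarrow> inner_d d (\<phi> (w i)) (\<phi> (v j)) = 0"
      using assms(1) by (simp add: v_def w_def All_less_Suc2 numeral_eq_Suc orth_rep_on_orthogonal[OF rep])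
    have "inner_d d (\<phi> (Inr (1, 1))) (\<phi> (Inr (0, 0))) \<noteq> 0" "inner_d d (\<phi> (Inr (0, 1))) (\<phi> (Inr (1, 0))) \<noteq> 0"
      using assms(1) by (simp_all, intro orth_rep_on_nonorthogonal[OF rep]; simp)+
    then show "\<forall>i<4. inner_d d (\<phi> (w i)) (\<phi> (v i)) \<noteq> 0"
      using assms(1) by (simp add: v_def w_def All_less_Suc2 numeral_eq_Suc orth_rep_on_self[OF rep])
  qed simp
qed

lemma book_compl_orth_rep_dim_ge:
  assumes t: "t \<ge> 4" and m: "m \<ge> 2"
    and rep: "orth_rep_on S (\<lambda>u v. \<not> book_adj t m u v) d \<phi>"
    and S: "book_vertices t m - {Inl 0} \<subseteq> S"
  shows "3 \<le> d"
proof -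
  define l where "l = t - 3"
  have l: "l \<ge> 1" "t - 3 = l" "t - 2 = Suc l" using t unfolding l_def by auto
  define v :: "nat \<Rightarrow> nat + nat \<times> nat" where "v i = [Inr (0, l), Inr (1, l), Inr (0, 0)] ! i" for i
  define w :: "nat \<Rightarrow> nat + nat \<times> nat" where "w i = [Inr (0, l), Inr (0, l - 1), Inl 1] ! i" for i
  have in_S: "Inl 1 \<in> S" "Inr (0, 0) \<in> S" "Inr (0, l) \<in> S" "Inr (1, l) \<in> S" "Inr (0, l - 1) \<in> S"
    using S l m by auto
  then have "\<forall>i<3. v i \<in> S" by (simp add: v_def All_less_Suc2 numeral_eq_Suc)
  then show ?thesis
  proof (rule orth_rep_on_grouped_triangular_le_dim[OF rep, where g = "\<lambda>_. 0" and w = "\<lambda>i. \<phi> (w i)"])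
    show "\<forall>i<3. \<forall>j<i. (0::nat) = 0 \<longrightarrow> inner_d d (\<phi> (w i)) (\<phi> (v j)) = 0"
      using in_S l m by (simp add: v_def w_def All_less_Suc2 numeral_eq_Suc orth_rep_on_orthogonal[OF rep])
    have "inner_d d (\<phi> (Inr (0, l - 1))) (\<phi> (Inr (1, l))) \<noteq> 0" "inner_d d (\<phi> (Inl 1)) (\<phi> (Inr (0, 0))) \<noteq> 0"
      using in_S l m by (simp_all, intro orth_rep_on_nonorthogonal[OF rep]; simp)+
    then show "\<forall>i<3. inner_d d (\<phi> (w i)) (\<phi> (v i)) \<noteq> 0"
      using in_S by (simp add: v_def w_def All_less_Suc2 numeral_eq_Suc orth_rep_on_self[OF rep])
  qed simp
qed

section \<open>Representations of the book graph\<close>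

lemma vectors_from_finite_coordinates:
  fixes h :: "'a \<Rightarrow> 'e \<Rightarrow> real"
  assumes "finite E"
  obtains \<phi> where "\<And>u v. inner_d (card E) (\<phi> u) (\<phi> v) = (\<Sum>e\<in>E. h u e * h v e)"
    and "\<And>u. (\<exists>i<card E. \<phi> u i \<noteq> 0) \<longleftrightarrow> (\<exists>e\<in>E. h u e \<noteq> 0)"
proof -
  obtain f where f: "bij_betw f {..<card E} E"
    using ex_bij_betw_nat_finite[OF assms] lessThan_atLeast0 by metis
  define \<phi> where "\<phi> u = (\<lambda>k. h u (f k))" for u
  show ?thesis
  proof
    show "inner_d (card E) (\<phi> u) (\<phi> v) = (\<Sum>e\<in>E. h u e * h v e)" for u v
      unfolding inner_d_def \<phi>_def using sum.reindex_bij_betw[OF f, of "\<lambda>e. h u e * h v e"] by simp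
    show "(\<exists>i<card E. \<phi> u i \<noteq> 0) \<longleftrightarrow> (\<exists>e\<in>E. h u e \<noteq> 0)" for u
      unfolding \<phi>_def using f bij_betw_iff_bijections[of f] by (metis lessThan_iff)
  qed
qed

lemma sum_indicator_mult_eq_0_iff:
  assumes "finite E"
  shows "(\<Sum>e\<in>E. (if P e then 1 else 0) * (if Q e then 1 else 0) :: real) = 0 \<longleftrightarrow> \<not> (\<exists>e\<in>E. P e \<and> Q e)"
  using assms by (subst sum_nonneg_eq_0_iff) auto

text \<open>Coordinate (j, i) stands for the edge from the path vertex (j, i) of copy j to its successor,
  which is the hub b = Inl 1 for i = t - 3.  A path vertex is the indicator of its incident
  coordinate edges, b the indicator of the last edges, and a = Inl 0 the alternating sum of the
  edges of the copies in J, which cancels on every path vertex except the first one.\<close>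
definition path_incidence :: "nat \<Rightarrow> nat \<Rightarrow> nat \<times> nat \<Rightarrow> real" where
  "path_incidence j i e = (if fst e = j \<and> (snd e = i \<or> Suc (snd e) = i) then 1 else 0)"

definition book_incidence :: "nat \<Rightarrow> nat set \<Rightarrow> nat + nat \<times> nat \<Rightarrow> nat \<times> nat \<Rightarrow> real" where
  "book_incidence t J u e = (case u of
      Inl p \<Rightarrow> if p = 0 then (if fst e \<in> J then (-1) ^ snd e else 0) else (if snd e = t - 3 then 1 else 0)
    | Inr (j, i) \<Rightarrow> path_incidence j i e)"

lemma book_incidence_path_path:
  assumes "finite E" "(j, i) \<in> E" "(j', i') \<in> E" "(j, i) \<noteq> (j', i')" "j < m" "j' < m" "i < t - 2" "i' < t - 2"
  shows "(\<Sum>e\<in>E. book_incidence t J (Inr (j, i)) e * book_incidence t J (Inr (j', i')) e) = 0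
    \<longleftrightarrow> \<not> book_adj t m (Inr (j, i)) (Inr (j', i'))"
proof -
  let ?P = "\<lambda>e. fst e = j \<and> (snd e = i \<or> Suc (snd e) = i)"
    and ?Q = "\<lambda>e. fst e = j' \<and> (snd e = i' \<or> Suc (snd e) = i')"
  have common_edge: "(\<exists>e\<in>E. ?P e \<and> ?Q e) \<longleftrightarrow> j' = j \<and> (i' = i + 1 \<or> i = i' + 1)"
  proof
    assume "\<exists>e\<in>E. ?P e \<and> ?Q e"
    then show "j' = j \<and> (i' = i + 1 \<or> i = i' + 1)" using assms(4) by auto
  next
    assume "j' = j \<and> (i' = i + 1 \<or> i = i' + 1)"
    then consider "j' = j" "i' = i + 1" | "j' = j" "i = i' + 1" by blast
    then show "\<exists>e\<in>E. ?P e \<and> ?Q e"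
    proof cases
      case 1
      then show ?thesis using assms(2) by (intro bexI[of _ "(j, i)"]) auto
    next
      case 2
      then show ?thesis using assms(3) by (intro bexI[of _ "(j', i')"]) auto
    qed
  qed
  have "(\<Sum>e\<in>E. book_incidence t J (Inr (j, i)) e * book_incidence t J (Inr (j', i')) e) =
      (\<Sum>e\<in>E. (if ?P e then 1 else 0) * (if ?Q e then 1 else 0))"
    unfolding book_incidence_def path_incidence_def by simp
  then have "(\<Sum>e\<in>E. book_incidence t J (Inr (j, i)) e * book_incidence t J (Inr (j', i')) e) = 0
      \<longleftrightarrow> \<not> (j' = j \<and> (i' = i + 1 \<or> i = i' + 1))"
    using sum_indicator_mult_eq_0_iff[OF assms(1), of ?P ?Q] common_edge by (simp only:)
  then show ?thesis using assms(5-8) by simp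
qed

lemma book_incidence_path_last:
  assumes "finite E" "(j, i) \<in> E" "j < m" "i < t - 2"
  shows "(\<Sum>e\<in>E. book_incidence t J (Inr (j, i)) e * book_incidence t J (Inl 1) e) = 0
    \<longleftrightarrow> \<not> book_adj t m (Inr (j, i)) (Inl 1)"
proof -
  let ?P = "\<lambda>e. fst e = j \<and> (snd e = i \<or> Suc (snd e) = i)" and ?Q = "\<lambda>e. snd e = t - 3"
  have "(\<Sum>e\<in>E. book_incidence t J (Inr (j, i)) e * book_incidence t J (Inl 1) e) =
      (\<Sum>e\<in>E. (if ?P e then 1 else 0) * (if ?Q e then 1 else 0))"
    unfolding book_incidence_def path_incidence_def by simp
  then have "(\<Sum>e\<in>E. book_incidence t J (Inr (j, i)) e * book_incidence t J (Inl 1) e) = 0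
      \<longleftrightarrow> \<not> (\<exists>e\<in>E. ?P e \<and> ?Q e)"
    using sum_indicator_mult_eq_0_iff[OF assms(1), of ?P ?Q] by (simp only:)
  then show ?thesis using assms(2-4) by auto
qed

lemma book_incidence_path_first:
  assumes "finite E" "(j, i) \<in> E" "j < m" "i < t - 2"
    and "j \<in> J \<Longrightarrow> 0 < i \<Longrightarrow> (j, i - 1) \<in> E" and "j \<notin> J \<Longrightarrow> i \<noteq> 0"
  shows "(\<Sum>e\<in>E. book_incidence t J (Inr (j, i)) e * book_incidence t J (Inl 0) e) = 0
    \<longleftrightarrow> \<not> book_adj t m (Inr (j, i)) (Inl 0)"
proof (cases "j \<in> J \<and> 0 < i")
  case True
  then have "(\<Sum>e\<in>E. book_incidence t J (Inr (j, i)) e * book_incidence t J (Inl 0) e) =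
      (\<Sum>e\<in>{(j, i), (j, i - 1)}. (-1) ^ snd e)"
    using assms(1,2,5) unfolding book_incidence_def path_incidence_def
    by (intro sum.mono_neutral_cong_right) auto
  also have "\<dots> = (-1) ^ i + (-1) ^ (i - 1)" using True by auto
  also have "\<dots> = 0" using True by (cases i) auto
  finally show ?thesis using True by simp
next
  case False
  then have "(\<Sum>e\<in>E. book_incidence t J (Inr (j, i)) e * book_incidence t J (Inl 0) e) =
      (if j \<in> J then 1 else 0)"
    using assms(1,2,6) unfolding book_incidence_def path_incidence_def
    by (subst sum.mono_neutral_cong_right[of E "{(j, i)}"]) auto
  then show ?thesis using False assms(3,6) by auto
qed

lemma book_incidence_hub_hub:
  assumes "finite E" "(j, t - 3) \<in> E" "j \<in> J"
  shows "(\<Sum>e\<in>E. book_incidence t J (Inl 0) e * book_incidence t J (Inl 1) e) \<noteq> 0"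
proof -
  have "(\<Sum>e\<in>E. book_incidence t J (Inl 0) e * book_incidence t J (Inl 1) e)
      = (-1) ^ (t - 3) * (\<Sum>e\<in>E. (if fst e \<in> J then 1 else 0) * (if snd e = t - 3 then 1 else 0))"
    unfolding book_incidence_def sum_distrib_left by (rule sum.cong) auto
  moreover have "(\<Sum>e\<in>E. (if fst e \<in> J then 1 else 0) * (if snd e = t - 3 then 1 else 0 :: real)) \<noteq> 0"
    unfolding sum_indicator_mult_eq_0_iff[OF assms(1)] using assms(2,3) by force
  ultimately show ?thesis by simp
qed

lemma book_orth_rep_incidence:
  assumes t: "t \<ge> 3" and S: "S \<subseteq> book_vertices t m" and E: "finite E"
    and path_coords: "\<And>j i. Inr (j, i) \<in> S \<Longrightarrow> (j, i) \<in> E"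
    and J: "j\<^sub>0 \<in> J" and J_coords: "\<And>j i. j \<in> J \<Longrightarrow> i < t - 2 \<Longrightarrow> (j, i) \<in> E"
    and first_missing: "\<And>j. j < m \<Longrightarrow> j \<notin> J \<Longrightarrow> Inr (j, 0) \<notin> S"
  shows "\<exists>\<phi>. orth_rep_on S (book_adj t m) (card E) \<phi>"
proof -
  let ?h = "book_incidence t J"
  obtain \<phi> where inner: "\<And>u v. inner_d (card E) (\<phi> u) (\<phi> v) = (\<Sum>e\<in>E. ?h u e * ?h v e)"
    and nonzero: "\<And>u. (\<exists>i<card E. \<phi> u i \<noteq> 0) \<longleftrightarrow> (\<exists>e\<in>E. ?h u e \<noteq> 0)"
    by (rule vectors_from_finite_coordinates[OF E, where h = ?h]) blast
  have j\<^sub>0: "(j\<^sub>0, 0) \<in> E" "(j\<^sub>0, t - 3) \<in> E" using t by (intro J_coords[OF J]; linarith)+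
  have path_hub: "(\<Sum>e\<in>E. ?h (Inr (j, i)) e * ?h (Inl p) e) = 0 \<longleftrightarrow> \<not> book_adj t m (Inr (j, i)) (Inl p)"
    if "Inr (j, i) \<in> S" "Inl p \<in> S" for j i p
  proof -
    have "(j, i) \<in> E" using path_coords[OF that(1)] .
    moreover have "j < m" "i < t - 2" "p = 0 \<or> p = 1" using that S by auto
    moreover have "j \<in> J \<Longrightarrow> (j, i - 1) \<in> E" using J_coords \<open>i < t - 2\<close> by simp
    moreover have "j \<notin> J \<Longrightarrow> i \<noteq> 0" using first_missing[OF \<open>j < m\<close>] that(1) by (cases i) auto
    ultimately show ?thesis
      using book_incidence_path_first[OF E, where j = j and i = i and t = t and J = J and m = m]
        book_incidence_path_last[OF E, where j = j and i = i and t = t and J = J and m = m]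
      by (elim disjE) simp_all
  qed
  have hub_hub: "(\<Sum>e\<in>E. ?h (Inl 0) e * ?h (Inl 1) e) \<noteq> 0"
    using book_incidence_hub_hub[OF E j\<^sub>0(2) J] .
  have "orth_rep_on S (book_adj t m) (card E) \<phi>"
  proof (rule orth_rep_onI)
    fix v assume "v \<in> S"
    then have "v \<in> book_vertices t m" using S by blast
    then show "\<exists>i<card E. \<phi> v i \<noteq> 0" unfolding nonzero
    proof (cases rule: book_vertices_cases)
      case (3 j i)
      then show "\<exists>e\<in>E. ?h v e \<noteq> 0" using path_coords \<open>v \<in> S\<close>
        by (intro bexI[of _ "(j, i)"]) (auto simp: book_incidence_def path_incidence_def)
    qed (use j\<^sub>0 J in \<open>force simp: book_incidence_def\<close>)+
  next
    have path_any: "(\<Sum>e\<in>E. ?h (Inr (j, i)) e * ?h v e) = 0 \<longleftrightarrow> \<not> book_adj t m (Inr (j, i)) v"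
      if "Inr (j, i) \<in> S" "v \<in> S" "Inr (j, i) \<noteq> v" for j i v
    proof -
      from that(2) S have "v \<in> book_vertices t m" by blast
      then show ?thesis
      proof (cases rule: book_vertices_cases)
        case (3 j' i')
        have "(j, i) \<in> E" "(j', i') \<in> E" "(j, i) \<noteq> (j', i')" "j < m" "i < t - 2"
          using that 3 path_coords S by auto
        with 3 show ?thesis using book_incidence_path_path[OF E, where J = J] by simp
      qed (use that path_hub in auto)
    qed
    fix u v assume uv: "u \<in> S" "v \<in> S" "u \<noteq> v"
    have "(\<Sum>e\<in>E. ?h u e * ?h v e) = 0 \<longleftrightarrow> \<not> book_adj t m u v"
    proof (cases "\<exists>j i. u = Inr (j, i) \<or> v = Inr (j, i)")
      case True
      then show ?thesis
        using path_any uv book_adj_commute[of t m u v] by (auto simp: mult.commute)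
    next
      case False
      then obtain p q where "u = Inl p" "v = Inl q" by (metis old.sum.exhaust surj_pair)
      moreover from this uv S have "p = 0 \<or> p = 1" "q = 0 \<or> q = 1" by auto
      ultimately show ?thesis
        using uv hub_hub by (auto simp: mult.commute)
    qed
    then show "inner_d (card E) (\<phi> u) (\<phi> v) = 0 \<longleftrightarrow> \<not> book_adj t m u v"
      unfolding inner .
  qed
  then show ?thesis by blast
qed

lemma book_orth_rep:
  assumes "t \<ge> 3" "m \<ge> 1"
  shows "\<exists>\<phi>. orth_rep_on (book_vertices t m) (book_adj t m) (m * (t - 2)) \<phi>"
proof -
  have "\<exists>\<phi>. orth_rep_on (book_vertices t m) (book_adj t m) (card ({..<m} \<times> {..<t - 2})) \<phi>"
    by (rule book_orth_rep_incidence[where J = "{..<m}" and j\<^sub>0 = 0]) (use assms in auto)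
  then show ?thesis by (simp add: card_cartesian_product)
qed

lemma book_orth_rep_delete_first:
  assumes "t \<ge> 3" "m \<ge> 2" "j < m"
  shows "\<exists>\<phi>. orth_rep_on (book_vertices t m - {Inr (j, 0)}) (book_adj t m) (m * (t - 2) - 1) \<phi>"
proof -
  let ?E = "{..<m} \<times> {..<t - 2} - {(j, 0)}"
  have "card ?E = m * (t - 2) - 1"
    using assms by (simp add: card_cartesian_product)
  moreover have "\<exists>\<phi>. orth_rep_on (book_vertices t m - {Inr (j, 0)}) (book_adj t m) (card ?E) \<phi>"
    by (rule book_orth_rep_incidence[where J = "{..<m} - {j}" and j\<^sub>0 = "if j = 0 then 1 else 0"])
      (use assms in auto)
  ultimately show ?thesis by simp
qed

definition book4_flip :: "nat + nat \<times> nat \<Rightarrow> nat + nat \<times> nat" where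
  "book4_flip u = (case u of Inl p \<Rightarrow> Inl (1 - p) | Inr (j, i) \<Rightarrow> Inr (j, 1 - i))"

lemma book4_vertices_cases:
  assumes "u \<in> book_vertices 4 m"
  obtains "u = Inl 0" | "u = Inl 1" | j where "u = Inr (j, 0)" "j < m" | j where "u = Inr (j, 1)" "j < m"
  using assms by (cases rule: book_vertices_cases) (auto simp: less_2_cases_iff)

lemma book4_orth_rep_delete_second:
  assumes "m \<ge> 2" "j < m"
  shows "\<exists>\<phi>. orth_rep_on (book_vertices 4 m - {Inr (j, 1)}) (book_adj 4 m) (m * 2 - 1) \<phi>"
proof -
  obtain \<phi> where \<phi>: "orth_rep_on (book_vertices 4 m - {Inr (j, 0)}) (book_adj 4 m) (m * 2 - 1) \<phi>"
    using book_orth_rep_delete_first[of 4 m j] assms by auto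
  have "orth_rep_on (book_vertices 4 m - {Inr (j, 1)}) (book_adj 4 m) (m * 2 - 1) (\<phi> \<circ> book4_flip)"
  proof (rule orth_rep_on_embed[OF \<phi>])
    show "inj_on book4_flip (book_vertices 4 m - {Inr (j, 1)})"
    proof (rule inj_onI)
      fix u v assume "u \<in> book_vertices 4 m - {Inr (j, 1)}" "v \<in> book_vertices 4 m - {Inr (j, 1)}"
        "book4_flip u = book4_flip v"
      then show "u = v"
        by (elim DiffE book4_vertices_cases) (auto simp: book4_flip_def)
    qed
    show "book4_flip ` (book_vertices 4 m - {Inr (j, 1)}) \<subseteq> book_vertices 4 m - {Inr (j, 0)}"
      by (auto elim!: book4_vertices_cases simp: book4_flip_def)
    show "book_adj 4 m (book4_flip u) (book4_flip v) = book_adj 4 m u v"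
      if "u \<in> book_vertices 4 m - {Inr (j, 1)}" "v \<in> book_vertices 4 m - {Inr (j, 1)}" for u v
      using that by (elim DiffE book4_vertices_cases) (auto simp: book4_flip_def)
  qed
  then show ?thesis by blast
qed

lemma mvr_on_book:
  assumes "t \<ge> 3" "m \<ge> 1" "book_vertices t m - {Inl 0} \<subseteq> S" "S \<subseteq> book_vertices t m"
  shows "mvr_on S (book_adj t m) = m * (t - 2)"
proof (rule antisym)
  obtain \<phi> where \<phi>: "orth_rep_on (book_vertices t m) (book_adj t m) (m * (t - 2)) \<phi>"
    using book_orth_rep[OF assms(1,2)] by blast
  then show "mvr_on S (book_adj t m) \<le> m * (t - 2)" using mvr_on_le_subset assms(4) by blast
  show "m * (t - 2) \<le> mvr_on S (book_adj t m)"
    using orth_rep_on_subset[OF \<phi> assms(4)] book_orth_rep_dim_ge[OF assms(1) _ assms(3)]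
    by (rule mvr_on_greatest)
qed

section \<open>Representations of the complement\<close>

definition vec4 :: "real \<Rightarrow> real \<Rightarrow> real \<Rightarrow> real \<Rightarrow> nat \<Rightarrow> real" where
  "vec4 a b c d = (\<lambda>i. if i = 0 then a else if i = 1 then b else if i = 2 then c else if i = 3 then d else 0)"

lemma vec4_simps [simp]:
  "vec4 a b c d 0 = a" "vec4 a b c d (Suc 0) = b" "vec4 a b c d 2 = c" "vec4 a b c d 3 = d"
  by (simp_all add: vec4_def)

lemma inner_d_vec4:
  "inner_d 2 (vec4 a b c d) (vec4 a' b' c' d') = a * a' + b * b'"
  "inner_d 3 (vec4 a b c d) (vec4 a' b' c' d') = a * a' + b * b' + c * c'"
  "inner_d 4 (vec4 a b c d) (vec4 a' b' c' d') = a * a' + b * b' + c * c' + d * d'"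
  by (simp_all add: inner_d_def vec4_def eval_nat_numeral lessThan_Suc)

lemma vec4_nonzero:
  "(a \<noteq> 0 \<and> 0 < n) \<or> (b \<noteq> 0 \<and> 1 < n) \<or> (c \<noteq> 0 \<and> 2 < n) \<or> (d \<noteq> 0 \<and> 3 < n) \<Longrightarrow> \<exists>i<n. vec4 a b c d i \<noteq> 0"
  by (elim disjE) (metis vec4_simps One_nat_def)+

definition book3_compl_vec :: "nat + nat \<times> nat \<Rightarrow> nat \<Rightarrow> real" where
  "book3_compl_vec u = (case u of Inl p \<Rightarrow> if p = 0 then vec4 1 0 0 0 else vec4 0 1 0 0 | Inr _ \<Rightarrow> vec4 0 0 1 0)"

definition book3_compl_vec_delete_hub :: "nat + nat \<times> nat \<Rightarrow> nat \<Rightarrow> real" where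
  "book3_compl_vec_delete_hub u = (case u of Inl _ \<Rightarrow> vec4 1 0 0 0 | Inr _ \<Rightarrow> vec4 0 1 0 0)"

lemma book3_compl_rep:
  "orth_rep_on (book_vertices 3 m) (\<lambda>u v. \<not> book_adj 3 m u v) 3 book3_compl_vec"
proof (rule orth_rep_onI)
  fix v assume "v \<in> book_vertices 3 m"
  then show "\<exists>i<3. book3_compl_vec v i \<noteq> 0"
    by (cases rule: book_vertices_cases) (auto simp: book3_compl_vec_def intro!: vec4_nonzero)
next
  fix u v assume uv: "u \<in> book_vertices 3 m" "v \<in> book_vertices 3 m" "u \<noteq> v"
  then show "inner_d 3 (book3_compl_vec u) (book3_compl_vec v) = 0 \<longleftrightarrow> \<not> \<not> book_adj 3 m u v"
    by (cases rule: book_vertices_cases[OF uv(1)]; cases rule: book_vertices_cases[OF uv(2)])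
      (auto simp: book3_compl_vec_def inner_d_vec4)
qed

lemma book3_compl_rep_delete_hub:
  assumes "p = 0 \<or> p = 1"
  shows "orth_rep_on (book_vertices 3 m - {Inl p}) (\<lambda>u v. \<not> book_adj 3 m u v) 2 book3_compl_vec_delete_hub"
proof (rule orth_rep_onI)
  fix v assume "v \<in> book_vertices 3 m - {Inl p}"
  then show "\<exists>i<2. book3_compl_vec_delete_hub v i \<noteq> 0"
    by (cases v) (auto simp: book3_compl_vec_delete_hub_def intro!: vec4_nonzero)
next
  fix u v assume uv: "u \<in> book_vertices 3 m - {Inl p}" "v \<in> book_vertices 3 m - {Inl p}" "u \<noteq> v"
  then have u: "u \<in> book_vertices 3 m" and v: "v \<in> book_vertices 3 m" by auto
  show "inner_d 2 (book3_compl_vec_delete_hub u) (book3_compl_vec_delete_hub v) = 0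
      \<longleftrightarrow> \<not> \<not> book_adj 3 m u v"
    using assms uv
    by (cases rule: book_vertices_cases[OF u]; cases rule: book_vertices_cases[OF v])
      (auto simp: book3_compl_vec_delete_hub_def inner_d_vec4)
qed

text \<open>The path vertices (j, 0) and (k, 1) are orthogonal iff j = k, since the inner product is
  (k + 1) - (j + 1); all other pairs of path vertices have a positive inner product.\<close>
definition book4_compl_vec :: "nat + nat \<times> nat \<Rightarrow> nat \<Rightarrow> real" where
  "book4_compl_vec u = (case u of Inl p \<Rightarrow> if p = 0 then vec4 1 0 0 0 else vec4 0 1 0 0
      | Inr (j, i) \<Rightarrow> if i = 0 then vec4 0 1 1 (real j + 1) else vec4 1 0 (real j + 1) (-1))"

definition book4_compl_vec_delete_hub :: "nat \<Rightarrow> nat + nat \<times> nat \<Rightarrow> nat \<Rightarrow> real" where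
  "book4_compl_vec_delete_hub p u = (case u of Inl _ \<Rightarrow> vec4 1 0 0 0
      | Inr (j, i) \<Rightarrow> if i = 1 - p then vec4 0 1 (real j) 0 else vec4 1 (- real j) 1 0)"

lemma book4_compl_rep:
  "orth_rep_on (book_vertices 4 m) (\<lambda>u v. \<not> book_adj 4 m u v) 4 book4_compl_vec"
proof (rule orth_rep_onI)
  fix v assume "v \<in> book_vertices 4 m"
  then show "\<exists>i<4. book4_compl_vec v i \<noteq> 0"
    by (cases rule: book4_vertices_cases) (auto simp: book4_compl_vec_def intro!: vec4_nonzero)
next
  fix u v assume uv: "u \<in> book_vertices 4 m" "v \<in> book_vertices 4 m" "u \<noteq> v"
  have nonzero: "(real j + 1) * (real k + 1) + 2 \<noteq> 0" "real j + (real k + (3 + real j * real k)) \<noteq> 0"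
    for j k :: nat
    using mult_nonneg_nonneg[of "real j + 1" "real k + 1"] mult_nonneg_nonneg[of "real j" "real k"]
    by linarith+
  show "inner_d 4 (book4_compl_vec u) (book4_compl_vec v) = 0 \<longleftrightarrow> \<not> \<not> book_adj 4 m u v"
    using uv
    by (cases rule: book4_vertices_cases[OF uv(1)]; cases rule: book4_vertices_cases[OF uv(2)])
      (auto simp: book4_compl_vec_def inner_d_vec4 algebra_simps nonzero)
qed

lemma book4_compl_rep_delete_hub:
  assumes "p = 0 \<or> p = 1"
  shows "orth_rep_on (book_vertices 4 m - {Inl p}) (\<lambda>u v. \<not> book_adj 4 m u v) 3 (book4_compl_vec_delete_hub p)"
proof (rule orth_rep_onI)
  fix v assume "v \<in> book_vertices 4 m - {Inl p}"
  then show "\<exists>i<3. book4_compl_vec_delete_hub p v i \<noteq> 0"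
    by (cases v) (auto simp: book4_compl_vec_delete_hub_def intro!: vec4_nonzero)
next
  fix u v assume uv: "u \<in> book_vertices 4 m - {Inl p}" "v \<in> book_vertices 4 m - {Inl p}" "u \<noteq> v"
  then have u: "u \<in> book_vertices 4 m" and v: "v \<in> book_vertices 4 m" by auto
  have nonzero: "1 + real j * real k \<noteq> 0" "2 + real j * real k \<noteq> 0" for j k :: nat
    using mult_nonneg_nonneg[of "real j" "real k"] by linarith+
  from assms show "inner_d 3 (book4_compl_vec_delete_hub p u) (book4_compl_vec_delete_hub p v) = 0
      \<longleftrightarrow> \<not> \<not> book_adj 4 m u v"
    using uv
    by (elim disjE; cases rule: book4_vertices_cases[OF u]; cases rule: book4_vertices_cases[OF v])
      (auto simp: book4_compl_vec_delete_hub_def inner_d_vec4 algebra_simps nonzero)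
qed

lemma cos_diff_multiples:
  "cos (real i * x - real k * x) = cos (real (if k \<le> i then i - k else k - i) * x)"
proof (cases "k \<le> i")
  case True
  then show ?thesis by (simp add: of_nat_diff algebra_simps)
next
  case False
  then have "real i * x - real k * x = - (real (k - i) * x)" by (simp add: of_nat_diff algebra_simps)
  then show ?thesis using False by simp
qed

text \<open>For t \<ge> 5 the complement has a representation in dimension 3.  With L = t - 3 and
  \<theta> = \<pi> / (2 L), the path vertex (j, i) goes to (\<plusminus>r sin (i \<theta>), \<plusminus>r cos (i \<theta>), 1) with sign (-1)^i,
  where r = c K^j for even i and r = c / K^j for odd i, c^2 = 1 / cos \<theta> and K = 1 / (sin \<theta> cos \<theta>);
  the hubs go to the first two unit vectors.  Two path vertices have inner product
  1 + (-1)^(i+k) r r' cos ((i - k) \<theta>).  It is positive for equal parities; for opposite parities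
  c^2 cos \<theta> = 1 makes consecutive vertices of one path orthogonal, and K is too large for any
  other pair to be.\<close>
definition book_angle :: "nat \<Rightarrow> real" where
  "book_angle L = pi / (2 * real L)"

definition book_growth :: "nat \<Rightarrow> real" where
  "book_growth L = 1 / (sin (book_angle L) * cos (book_angle L))"

definition book_scale :: "nat \<Rightarrow> real" where
  "book_scale L = sqrt (1 / cos (book_angle L))"

definition book_radius :: "nat \<Rightarrow> nat \<Rightarrow> nat \<Rightarrow> real" where
  "book_radius L j i = book_scale L * (if even i then book_growth L ^ j else 1 / book_growth L ^ j)"

definition book_path_vec :: "nat \<Rightarrow> nat \<Rightarrow> nat \<Rightarrow> nat \<Rightarrow> real" where
  "book_path_vec L j i = vec4 (- ((-1) ^ i * book_radius L j i * sin (real i * book_angle L)))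
     ((-1) ^ i * book_radius L j i * cos (real i * book_angle L)) 1 0"

definition book_compl_vec :: "nat \<Rightarrow> nat + nat \<times> nat \<Rightarrow> nat \<Rightarrow> real" where
  "book_compl_vec t u = (case u of Inl p \<Rightarrow> if p = 0 then vec4 1 0 0 0 else vec4 0 1 0 0
      | Inr (j, i) \<Rightarrow> book_path_vec (t - 3) j i)"

context
  fixes L :: nat
  assumes L: "L \<ge> 2"
begin

lemma book_angle_pos: "0 < book_angle L"
  unfolding book_angle_def using L by simp

lemma book_angle_less: "book_angle L < pi / 2"
proof -
  have "pi / (2 * real L) \<le> pi / (2 * 2)" using L by (intro divide_left_mono) auto
  then show ?thesis unfolding book_angle_def using pi_gt_zero by linarith
qed

lemma sin_book_angle_pos: "0 < sin (book_angle L)"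
  using book_angle_pos book_angle_less by (intro sin_gt_zero) auto

lemma cos_book_angle_pos: "0 < cos (book_angle L)"
  using book_angle_pos book_angle_less by (intro cos_gt_zero) auto

lemma multiple_book_angle_bounds:
  assumes "n \<le> L"
  shows "0 \<le> real n * book_angle L" "real n * book_angle L \<le> pi / 2"
proof -
  have "real n * book_angle L \<le> real L * book_angle L"
    using assms book_angle_pos by (intro mult_right_mono) auto
  also have "\<dots> = pi / 2" unfolding book_angle_def using L by simp
  finally show "real n * book_angle L \<le> pi / 2" .
  show "0 \<le> real n * book_angle L" using book_angle_pos by simp
qed

lemma cos_multiple_book_angle_nonneg:
  assumes "n \<le> L"
  shows "0 \<le> cos (real n * book_angle L)"
  using multiple_book_angle_bounds[OF assms] pi_gt_zero by (intro cos_ge_zero) linarith+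

lemma cos_multiple_book_angle_eq_iff:
  assumes "n \<le> L"
  shows "cos (real n * book_angle L) = cos (book_angle L) \<longleftrightarrow> n = 1"
proof
  assume "cos (real n * book_angle L) = cos (book_angle L)"
  moreover have "0 \<le> real n * book_angle L" "real n * book_angle L \<le> pi"
    "0 \<le> book_angle L" "book_angle L \<le> pi"
    using multiple_book_angle_bounds[OF assms] book_angle_pos book_angle_less pi_gt_zero by linarith+
  ultimately have "real n * book_angle L = book_angle L" using cos_inj_pi by blast
  then show "n = 1" using book_angle_pos by simp
qed simp

lemma sin_book_angle_le_cos_multiple:
  assumes "n < L"
  shows "sin (book_angle L) \<le> cos (real n * book_angle L)"
proof -
  have "real n * book_angle L \<le> real (L - 1) * book_angle L"
    using assms book_angle_pos by (intro mult_right_mono) auto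
  also have "\<dots> = pi / 2 - book_angle L" using L by (simp add: book_angle_def of_nat_diff field_simps)
  finally have "cos (pi / 2 - book_angle L) \<le> cos (real n * book_angle L)"
    using multiple_book_angle_bounds[of n] assms book_angle_pos book_angle_less
    by (subst cos_mono_le_eq) auto
  then show ?thesis by (simp add: cos_sin_eq[symmetric] sin_cos_eq)
qed

lemma sin_multiple_book_angle_eq_0_iff:
  assumes "n \<le> L"
  shows "sin (real n * book_angle L) = 0 \<longleftrightarrow> n = 0"
proof
  assume "sin (real n * book_angle L) = 0"
  moreover have "real n * book_angle L < pi"
    using multiple_book_angle_bounds[OF assms] pi_gt_zero by linarith
  ultimately have "\<not> 0 < real n * book_angle L" using sin_gt_zero by fastforce
  then show "n = 0" using book_angle_pos by (cases n) auto
qed simp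

lemma cos_multiple_book_angle_eq_0_iff:
  assumes "n \<le> L"
  shows "cos (real n * book_angle L) = 0 \<longleftrightarrow> n = L"
proof
  assume "cos (real n * book_angle L) = 0"
  then show "n = L"
    using assms sin_book_angle_le_cos_multiple[of n] sin_book_angle_pos by (cases "n < L") auto
next
  assume "n = L"
  then show "cos (real n * book_angle L) = 0" unfolding book_angle_def using L by simp
qed

lemma sin_cos_book_angle_less_1: "sin (book_angle L) < 1" "cos (book_angle L) < 1"
proof -
  have "sin (book_angle L) ^ 2 + cos (book_angle L) ^ 2 = 1" by simp
  moreover have "0 < sin (book_angle L) ^ 2" "0 < cos (book_angle L) ^ 2"
    using sin_book_angle_pos cos_book_angle_pos by auto
  ultimately have "sin (book_angle L) ^ 2 < 1" "cos (book_angle L) ^ 2 < 1" by linarith+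
  then show "sin (book_angle L) < 1" "cos (book_angle L) < 1"
    using sin_book_angle_pos cos_book_angle_pos by (metis abs_of_pos abs_square_less_1)+
qed

lemma book_growth_pos: "0 < book_growth L"
  unfolding book_growth_def using sin_book_angle_pos cos_book_angle_pos by simp

lemma book_growth_gt_1: "1 < book_growth L"
proof -
  have "sin (book_angle L) * cos (book_angle L) < 1 * 1"
    using sin_book_angle_pos cos_book_angle_pos sin_cos_book_angle_less_1 by (intro mult_strict_mono) auto
  then show ?thesis unfolding book_growth_def using sin_book_angle_pos cos_book_angle_pos by simp
qed

lemma book_scale_sq: "book_scale L * book_scale L = 1 / cos (book_angle L)"
  unfolding book_scale_def using cos_book_angle_pos by simp

lemma book_radius_pos: "0 < book_radius L j i"
  unfolding book_radius_def book_scale_def using cos_book_angle_pos book_growth_pos by simp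

lemma book_growth_ratio_mult_cos_eq_iff:
  assumes "n \<le> L"
  shows "book_growth L ^ j / book_growth L ^ j' * cos (real n * book_angle L) = cos (book_angle L)
    \<longleftrightarrow> j = j' \<and> n = 1"
proof -
  let ?K = "book_growth L" and ?c = "cos (real n * book_angle L)"
  consider "j = j'" | "j' < j" | "j < j'" by linarith
  then show ?thesis
  proof cases
    case 1
    then show ?thesis using cos_multiple_book_angle_eq_iff[OF assms] book_growth_pos by simp
  next
    case 2
    then have "?K ^ 1 \<le> ?K ^ (j - j')" using book_growth_gt_1 by (intro power_increasing) auto
    then have "?K \<le> ?K ^ j / ?K ^ j'" using 2 book_growth_pos by (simp add: power_diff)
    moreover have "sin (book_angle L) \<le> ?c" if "n < L"
      using sin_book_angle_le_cos_multiple[OF that] .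
    moreover have "cos (book_angle L) < ?K * sin (book_angle L)"
    proof -
      have "cos (book_angle L) * cos (book_angle L) < 1 * 1"
        using cos_book_angle_pos sin_cos_book_angle_less_1 by (intro mult_strict_mono) auto
      then show ?thesis
        unfolding book_growth_def using sin_book_angle_pos cos_book_angle_pos by (simp add: field_simps)
    qed
    ultimately have "?K ^ j / ?K ^ j' * ?c \<noteq> cos (book_angle L)"
      using assms cos_multiple_book_angle_eq_0_iff[OF assms] cos_book_angle_pos sin_book_angle_pos
        book_growth_pos mult_mono[of ?K "?K ^ j / ?K ^ j'" "sin (book_angle L)" ?c]
      by (cases "n < L") auto
    then show ?thesis using 2 by simp
  next
    case 3
    then have "?K ^ 1 \<le> ?K ^ (j' - j)" using book_growth_gt_1 by (intro power_increasing) auto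
    then have "?K ^ j / ?K ^ j' \<le> 1 / ?K" using 3 book_growth_pos
      by (simp add: power_diff divide_le_eq field_simps)
    moreover have "1 / ?K < cos (book_angle L)"
      unfolding book_growth_def using sin_cos_book_angle_less_1 cos_book_angle_pos by simp
    moreover have "?c \<le> 1" by simp
    ultimately have "?K ^ j / ?K ^ j' * ?c < cos (book_angle L)"
      using book_growth_pos mult_left_mono[of ?c 1 "?K ^ j / ?K ^ j'"] by fastforce
    then show ?thesis using 3 by simp
  qed
qed

lemma inner_d_book_path_vec:
  "inner_d 3 (book_path_vec L j i) (book_path_vec L j' k) =
     (-1) ^ (i + k) * (book_radius L j i * book_radius L j' k) * cos (real i * book_angle L - real k * book_angle L) + 1"
  unfolding book_path_vec_def inner_d_vec4 cos_diff power_add by (simp add: algebra_simps)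

lemma inner_d_book_path_vec_eq_0_iff:
  assumes "i \<le> L" "k \<le> L"
  shows "inner_d 3 (book_path_vec L j i) (book_path_vec L j' k) = 0 \<longleftrightarrow> j = j' \<and> (i = k + 1 \<or> k = i + 1)"
proof -
  define n where "n = (if k \<le> i then i - k else k - i)"
  have "n \<le> L" unfolding n_def using assms by auto
  have inner: "inner_d 3 (book_path_vec L j i) (book_path_vec L j' k) =
      (-1) ^ (i + k) * (book_radius L j i * book_radius L j' k) * cos (real n * book_angle L) + 1"
    unfolding inner_d_book_path_vec n_def cos_diff_multiples ..
  show ?thesis
  proof (cases "even (i + k)")
    case True
    then have "\<not> (i = k + 1 \<or> k = i + 1)" by auto
    moreover have "0 \<le> book_radius L j i * book_radius L j' k * cos (real n * book_angle L)"
      using book_radius_pos[of j i] book_radius_pos[of j' k] cos_multiple_book_angle_nonneg[OF \<open>n \<le> L\<close>]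
      by (intro mult_nonneg_nonneg) auto
    ultimately show ?thesis unfolding inner using True by simp
  next
    case False
    obtain a b where ab: "{a, b} = {j, j'}"
      "book_radius L j i * book_radius L j' k = book_growth L ^ a / book_growth L ^ b / cos (book_angle L)"
    proof (cases "even i")
      case True
      with False have "odd k" by simp
      with True have "book_radius L j i * book_radius L j' k =
          book_scale L * book_scale L * (book_growth L ^ j / book_growth L ^ j')"
        by (simp add: book_radius_def)
      then show ?thesis using book_scale_sq by (intro that[of j j']) auto
    next
      case odd_i: False
      with False have "even k" by simp
      with odd_i have "book_radius L j i * book_radius L j' k =
          book_scale L * book_scale L * (book_growth L ^ j' / book_growth L ^ j)"
        by (simp add: book_radius_def)
      then show ?thesis using book_scale_sq by (intro that[of j' j]) auto
    qed
    have "inner_d 3 (book_path_vec L j i) (book_path_vec L j' k) = 0 \<longleftrightarrow>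
        book_growth L ^ a / book_growth L ^ b * cos (real n * book_angle L) = cos (book_angle L)"
      unfolding inner ab(2) using False cos_book_angle_pos book_growth_pos by (auto simp: field_simps)
    also have "\<dots> \<longleftrightarrow> j = j' \<and> n = 1"
      unfolding book_growth_ratio_mult_cos_eq_iff[OF \<open>n \<le> L\<close>] using ab(1) by (auto simp: doubleton_eq_iff)
    finally show ?thesis unfolding n_def by auto
  qed
qed

lemma inner_d_book_path_vec_hubs:
  assumes "i \<le> L"
  shows "inner_d 3 (vec4 1 0 0 0) (book_path_vec L j i) = 0 \<longleftrightarrow> i = 0"
    and "inner_d 3 (vec4 0 1 0 0) (book_path_vec L j i) = 0 \<longleftrightarrow> i = L"
  unfolding book_path_vec_def inner_d_vec4
  using book_radius_pos[of j i] sin_multiple_book_angle_eq_0_iff[OF assms]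
    cos_multiple_book_angle_eq_0_iff[OF assms] by simp_all

end

lemma book_compl_rep:
  assumes t: "t \<ge> 5"
  shows "orth_rep_on (book_vertices t m) (\<lambda>u v. \<not> book_adj t m u v) 3 (book_compl_vec t)"
proof (rule orth_rep_onI)
  fix v assume "v \<in> book_vertices t m"
  then show "\<exists>i<3. book_compl_vec t v i \<noteq> 0"
    by (cases rule: book_vertices_cases) (auto simp: book_compl_vec_def book_path_vec_def intro!: vec4_nonzero)
next
  define L where "L = t - 3"
  have L: "L \<ge> 2" "t - 2 = Suc L" "t - 3 = L" unfolding L_def using t by auto
  have path_any: "inner_d 3 (book_path_vec L j i) (book_compl_vec t v) = 0 \<longleftrightarrow> book_adj t m (Inr (j, i)) v"
    if "Inr (j, i) \<in> book_vertices t m" "v \<in> book_vertices t m" "Inr (j, i) \<noteq> v" for j i v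
    using that(2)
  proof (cases rule: book_vertices_cases)
    case 1
    then show ?thesis using that inner_d_book_path_vec_hubs(1)[OF L(1), of i j] L
      by (simp add: book_compl_vec_def inner_d_commute)
  next
    case 2
    then show ?thesis using that inner_d_book_path_vec_hubs(2)[OF L(1), of i j] L
      by (simp add: book_compl_vec_def inner_d_commute)
  next
    case (3 j' k)
    then show ?thesis using that inner_d_book_path_vec_eq_0_iff[OF L(1), of i k j j'] L
      by (auto simp: book_compl_vec_def)
  qed
  have path_vertex: "inner_d 3 (book_compl_vec t u) (book_compl_vec t v) = 0 \<longleftrightarrow> book_adj t m u v"
    if "u \<in> book_vertices t m" "v \<in> book_vertices t m" "u \<noteq> v" "u = Inr (j, i)" for u v j i
    using path_any[of j i v] that by (simp add: book_compl_vec_def L(3))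
  fix u v assume uv: "u \<in> book_vertices t m" "v \<in> book_vertices t m" "u \<noteq> v"
  consider j i where "u = Inr (j, i)" | j i where "v = Inr (j, i)" | p q where "u = Inl p" "v = Inl q"
    by (metis old.sum.exhaust surj_pair)
  then show "inner_d 3 (book_compl_vec t u) (book_compl_vec t v) = 0 \<longleftrightarrow> \<not> \<not> book_adj t m u v"
  proof cases
    case 1
    then show ?thesis using path_vertex uv by simp
  next
    case 2
    then show ?thesis
      using path_vertex[of v u] uv inner_d_commute book_adj_commute by simp
  next
    case 3
    with uv show ?thesis by (auto simp: book_compl_vec_def inner_d_vec4)
  qed
qed

section \<open>Complement criticality of the book graphs\<close>

lemma mvr_sum_le:
  assumes "orth_rep_on T A d \<phi>" "orth_rep_on T' (\<lambda>u v. \<not> A u v) d' \<psi>" "S \<subseteq> T" "S \<subseteq> T'"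
  shows "mvr_sum S A \<le> d + d'"
  unfolding mvr_sum_def using assms by (intro add_mono mvr_on_le_subset)

lemma book_compl_orth_rep_exists:
  assumes "t \<ge> 3"
  shows "\<exists>d \<psi>. orth_rep_on (book_vertices t m) (\<lambda>u v. \<not> book_adj t m u v) d \<psi>"
proof -
  consider "t = 3" | "t = 4" | "t \<ge> 5" using assms by linarith
  then show ?thesis
  proof cases
    case 1
    show ?thesis unfolding 1 by (intro exI) (rule book3_compl_rep)
  next
    case 2
    show ?thesis unfolding 2 by (intro exI) (rule book4_compl_rep)
  next
    case 3
    show ?thesis by (intro exI) (rule book_compl_rep[OF 3])
  qed
qed

lemma complement_critical_book_graph_iff:
  assumes "t \<ge> 3" "m \<ge> 1"
  shows "complement_critical (book_graph t m) \<longleftrightarrow>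
    (\<forall>v\<in>book_vertices t m. mvr_sum (book_vertices t m - {v}) (book_adj t m)
        < mvr_sum (book_vertices t m) (book_adj t m))"
proof -
  obtain \<phi> where "orth_rep_on (book_vertices t m) (book_adj t m) (m * (t - 2)) \<phi>"
    using book_orth_rep[OF assms] by blast
  moreover obtain d \<psi> where "orth_rep_on (book_vertices t m) (\<lambda>u v. \<not> book_adj t m u v) d \<psi>"
    using book_compl_orth_rep_exists[OF assms(1)] by blast
  moreover have "\<forall>v\<in>book_vertices t m. book_vertices t m - {v} \<noteq> {}"
  proof
    fix v :: "nat + nat \<times> nat"
    have "Inl (if v = Inl 0 then 1 else 0) \<in> book_vertices t m - {v}" by auto
    then show "book_vertices t m - {v} \<noteq> {}" by (metis empty_iff)
  qed
  ultimately show ?thesis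
    unfolding complement_critical_iff_mvr_sum[OF simple_book_graph[OF assms(1)]]
      verts_book_graph adj_book_graph
    by (rule mvr_sum_decreases_iff_vertex_deleted)
qed

lemma book_not_complement_critical:
  assumes "t \<ge> 5" "m \<ge> 2"
  shows "\<not> complement_critical (book_graph t m)"
proof -
  let ?V = "book_vertices t m" and ?A = "book_adj t m" and ?B = "\<lambda>u v. \<not> book_adj t m u v"
  have rep_compl: "orth_rep_on ?V ?B 3 (book_compl_vec t)" using book_compl_rep assms(1) .
  have "mvr_sum ?V ?A \<le> m * (t - 2) + 3"
    using mvr_on_book[of t m ?V] mvr_on_le[OF rep_compl] assms by (simp add: mvr_sum_def)
  also have "\<dots> \<le> mvr_sum (?V - {Inl 0}) ?A"
  proof -
    have "3 \<le> d" if "orth_rep_on (?V - {Inl 0}) ?B d \<psi>" for d \<psi>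
      using book_compl_orth_rep_dim_ge[OF _ assms(2) that] assms(1) by simp
    then have "3 \<le> mvr_on (?V - {Inl 0}) ?B"
      by (intro mvr_on_greatest[OF orth_rep_on_subset[OF rep_compl]]) auto
    then show ?thesis using mvr_on_book[of t m "?V - {Inl 0}"] assms by (simp add: mvr_sum_def)
  qed
  finally have "\<not> mvr_sum (?V - {Inl 0}) ?A < mvr_sum ?V ?A" by simp
  moreover have "complement_critical (book_graph t m) \<Longrightarrow> mvr_sum (?V - {Inl 0}) ?A < mvr_sum ?V ?A"
    using complement_critical_book_graph_iff[of t m] assms by simp
  ultimately show ?thesis by blast
qed

lemma mvr_on_book3_compl:
  assumes "m \<ge> 1"
  shows "mvr_on (book_vertices 3 m) (\<lambda>u v. \<not> book_adj 3 m u v) = 3"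
  using mvr_on_le[OF book3_compl_rep] mvr_on_greatest[OF book3_compl_rep book3_compl_orth_rep_dim_ge[OF assms]]
  by (rule antisym)

lemma mvr_on_book4_compl:
  assumes "m \<ge> 2"
  shows "mvr_on (book_vertices 4 m) (\<lambda>u v. \<not> book_adj 4 m u v) = 4"
  using mvr_on_le[OF book4_compl_rep] mvr_on_greatest[OF book4_compl_rep book4_compl_orth_rep_dim_ge[OF assms]]
  by (rule antisym)

lemma book3_complement_critical:
  assumes "m \<ge> 2"
  shows "complement_critical (book_graph 3 m)"
proof -
  let ?V = "book_vertices 3 m" and ?A = "book_adj 3 m"
  obtain \<phi> where \<phi>: "orth_rep_on ?V ?A m \<phi>" using book_orth_rep[of 3 m] assms by auto
  have hub: "mvr_sum (?V - {Inl p}) ?A \<le> m + 2" if "p = 0 \<or> p = 1" for p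
    using \<phi> book3_compl_rep_delete_hub[OF that] by (rule mvr_sum_le) auto
  have "mvr_sum ?V ?A = m + 3"
    using mvr_on_book[of 3 m ?V] mvr_on_book3_compl assms by (simp add: mvr_sum_def)
  moreover have "mvr_sum (?V - {v}) ?A < m + 3" if "v \<in> ?V" for v
    using that
  proof (cases rule: book_vertices_cases)
    case (3 j i)
    then obtain \<phi>' where "orth_rep_on (?V - {v}) ?A (m - 1) \<phi>'"
      using book_orth_rep_delete_first[of 3 m j] assms by auto
    then have "mvr_sum (?V - {v}) ?A \<le> (m - 1) + 3"
      using book3_compl_rep by (rule mvr_sum_le) auto
    then show ?thesis using assms by linarith
  qed (use hub[of 0] hub[of 1] in simp)+
  ultimately show ?thesis using complement_critical_book_graph_iff[of 3 m] assms by simp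
qed

lemma book4_complement_critical:
  assumes "m \<ge> 2"
  shows "complement_critical (book_graph 4 m)"
proof -
  let ?V = "book_vertices 4 m" and ?A = "book_adj 4 m"
  obtain \<phi> where \<phi>: "orth_rep_on ?V ?A (m * 2) \<phi>" using book_orth_rep[of 4 m] assms by auto
  have hub: "mvr_sum (?V - {Inl p}) ?A \<le> m * 2 + 3" if "p = 0 \<or> p = 1" for p
    using \<phi> book4_compl_rep_delete_hub[OF that] by (rule mvr_sum_le) auto
  have "mvr_sum ?V ?A = m * 2 + 4"
    using mvr_on_book[of 4 m ?V] mvr_on_book4_compl assms by (simp add: mvr_sum_def)
  moreover have "mvr_sum (?V - {v}) ?A < m * 2 + 4" if "v \<in> ?V" for v
    using that
  proof (cases rule: book4_vertices_cases)
    case (3 j)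
    then obtain \<phi>' where "orth_rep_on (?V - {v}) ?A (m * 2 - 1) \<phi>'"
      using book_orth_rep_delete_first[of 4 m j] assms by auto
    then have "mvr_sum (?V - {v}) ?A \<le> (m * 2 - 1) + 4"
      using book4_compl_rep by (rule mvr_sum_le) auto
    then show ?thesis using assms by linarith
  next
    case (4 j)
    then obtain \<phi>' where "orth_rep_on (?V - {v}) ?A (m * 2 - 1) \<phi>'"
      using book4_orth_rep_delete_second[of m j] assms by auto
    then have "mvr_sum (?V - {v}) ?A \<le> (m * 2 - 1) + 4"
      using book4_compl_rep by (rule mvr_sum_le) auto
    then show ?thesis using assms by linarith
  qed (use hub[of 0] hub[of 1] in simp)+
  ultimately show ?thesis using complement_critical_book_graph_iff[of 4 m] assms by simp
qed

theorem corollary5p7: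
  fixes t m :: nat
  assumes "t \<ge> 3" and "m \<ge> 2"
  shows "complement_critical (book_graph t m) \<longleftrightarrow> (t = 3 \<or> t = 4)"
proof -
  consider "t = 3" | "t = 4" | "t \<ge> 5" using assms(1) by linarith
  then show ?thesis
  proof cases
    case 1
    then show ?thesis using book3_complement_critical[OF assms(2)] by simp
  next
    case 2
    then show ?thesis using book4_complement_critical[OF assms(2)] by simp
  next
    case 3
    then show ?thesis using book_not_complement_critical[OF 3 assms(2)] by simp
  qed
qed

end
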